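(* Let $A$ be an infinite set, fix $z\in A$, $A'=A\setminus\{z\}$, and $p\in[1,\infty)$. Let $\alpha^n=a_1^na_2^n\ldots\in N(A)$ for $n\in\mathbb{N}^*$, $x_n=p_p(\alpha^n)$, and let $\alpha=a_1a_2\ldots\in N(A)$, $x=p_p(\alpha)$. (i) If the sequence $(a_n)_{n\in\mathbb{N}^*}$ is not eventually constant (for every $q\in\mathbb{N}^*$ it is not constant from index $q$ on), then $\lim_{n\to\infty}\|x_n-x\|_p=0$ if and only if $\lim_{n\to\infty}\alpha^n=\alpha$ in $N(A)$. (ii) If there are $n_0\in\mathbb{N}^*$, $n_0\ge2$, and $a,b\in A$, $a\neq b$, with $\alpha=a_1\ldots a_{n_0-1}abbb\ldots$ (the $n_0$-th letter is $a$ and all later letters are $b$), then $\lim_{n\to\infty}\|x_n-x\|_p=0$ if and only if for every $m\in\mathbb{N}^*$ with $m>n_0+1$ there exists $l_m\in\mathbb{N}^*$ such that for every $l\ge l_m$ one of the following holds: ($\alpha$) $a_i^l=a_i$ for $i=1,\ldots,n_0-1$, $a_{n_0}^l=a$, and $a_{n_0+1}^l=\cdots=a_m^l=b$; ($\beta$) $a_i^l=a_i$ for $i=1,\ldots,n_0-1$, $a_{n_0}^l=b$, and $a_{n_0+1}^l=\cdots=a_m^l=a$.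
   Context: $l^p(A)$ is the set of families $x=(x_c)_{c\in A'}$ of real numbers with $x_c=0$ for all but countably many $c$ and $\sum_c|x_c|^p<\infty$, with norm $\|x\|_p=(\sum_c|x_c|^p)^{1/p}$. $N(A)$ is the set of all sequences $\alpha=a_1a_2a_3\ldots$ with $a_k\in A$, with metric $d(v,v')=1/k$ where $k$ is the first index at which $v,v'$ differ, and $d(v,v)=0$. The map $p_p:N(A)\to l^p(A)$ is $p_p(\alpha)=(\alpha_c)_{c\in A'}$ where, for $\alpha=a_1a_2\ldots$, $\alpha_c=\sum_{k:\,a_k=c}2^{-k}$ (and $\alpha_c=0$ if no $a_k$ equals $c$). *)

theory Defs
  imports "HOL-Analysis.Analysis"
begin

text \<open>Words in N(A) are represented as functions nat => 'a; only the letters at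
  positions k >= 1 are meaningful (alpha = a_1 a_2 a_3 ...).\<close>

definition inN :: "'a set \<Rightarrow> (nat \<Rightarrow> 'a) \<Rightarrow> bool" where
  "inN A v \<longleftrightarrow> (\<forall>k\<ge>1. v k \<in> A)"

definition dN :: "(nat \<Rightarrow> 'a) \<Rightarrow> (nat \<Rightarrow> 'a) \<Rightarrow> real" where
  "dN v w = (if \<forall>k\<ge>1. v k = w k then 0
             else 1 / real (LEAST k. 1 \<le> k \<and> v k \<noteq> w k))"

definition coordN :: "(nat \<Rightarrow> 'a) \<Rightarrow> 'a \<Rightarrow> real" where
  "coordN v c = (\<Sum>k. if 1 \<le> k \<and> v k = c then (1/2) ^ k else 0)"

text \<open>p_p(alpha) = (alpha_c)_{c in A'}, as a family indexed by A' = A - {z}.\<close>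

definition pmap :: "(nat \<Rightarrow> 'a) \<Rightarrow> 'a \<Rightarrow> real" where
  "pmap v = (\<lambda>c. coordN v c)"

definition lp_norm :: "real \<Rightarrow> 'a set \<Rightarrow> ('a \<Rightarrow> real) \<Rightarrow> real" where
  "lp_norm p I x = (\<Sum>\<^sub>\<infinity>c\<in>I. \<bar>x c\<bar> powr p) powr (1 / p)"

end

theory Submission
  imports Defs
begin

text \<open>
  The coordinate of a letter c in the image of a word is a binary expansion: the sum of
  2^(-k) over the positions k carrying c. Words agreeing on their first M letters therefore
  have images within (2 * 2^(-M))^(1/p) in l^p. Conversely, at the first position K where
  two words differ, a lexicographic comparison of binary expansions finds a letter c other
  than the omitted letter z whose coordinates differ by at least 2^(-j), where j is a later
  position at which the second word has not yet settled into a constant tail. The only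
  escape is a word ending in a b b b ..., whose image coincides with that of the word
  ending in b a a a ...; this is exactly where the two cases of the theorem part ways.
\<close>

section \<open>Coordinates as binary expansions\<close>

definition letter_ind :: "(nat \<Rightarrow> 'a) \<Rightarrow> 'a \<Rightarrow> nat \<Rightarrow> real" where
  "letter_ind v c k = (if 1 \<le> k \<and> v k = c then 1 else 0)"

lemma summable_bounded_times_half_power:
  fixes t :: "nat \<Rightarrow> real"
  assumes "\<And>k. \<bar>t k\<bar> \<le> B"
  shows "summable (\<lambda>k. t k * (1/2)^k)"
proof (rule summable_comparison_test'[where g="\<lambda>k. B * (1/2)^k" and N=0])
  show "summable (\<lambda>k. B * (1/2::real)^k)"
    by (intro summable_mult summable_geometric) simp
  show "norm (t k * (1/2)^k) \<le> B * (1/2)^k" for k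
    using assms[of k] by (simp add: abs_mult)
qed

lemma summable_letter_ind: "summable (\<lambda>k. letter_ind v c k * (1/2)^k)"
  by (rule summable_bounded_times_half_power[where B=1]) (simp add: letter_ind_def)

lemma coordN_eq_suminf_letter_ind: "coordN v c = (\<Sum>k. letter_ind v c k * (1/2)^k)"
  unfolding coordN_def letter_ind_def by (rule arg_cong[where f=suminf]) auto

lemma coordN_diff:
  "coordN v c - coordN w c = (\<Sum>k. (letter_ind v c k - letter_ind w c k) * (1/2)^k)"
  unfolding coordN_eq_suminf_letter_ind
  by (simp add: suminf_diff[OF summable_letter_ind summable_letter_ind] left_diff_distrib)

lemma half_power_tail_sums: "(\<lambda>k. if M < k then (1/2::real)^k else 0) sums ((1/2)^M)"
proof -
  have "(\<lambda>i. (1/2::real)^(Suc M) * (1/2)^i) sums ((1/2)^(Suc M) * (1 / (1 - 1/2)))"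
    by (intro sums_mult geometric_sums) simp
  then have "(\<lambda>i. if M < i + Suc M then (1/2::real)^(i + Suc M) else 0) sums ((1/2)^M)"
    by (simp add: power_add mult.commute)
  moreover have "(\<Sum>i<Suc M. if M < i then (1/2::real)^i else 0) = 0" by simp
  ultimately show ?thesis
    using sums_iff_shift[where n="Suc M" and f="\<lambda>k. if M < k then (1/2::real)^k else 0"]
    by simp
qed

lemma half_power_antimono: "i \<le> j \<Longrightarrow> (1/2::real)^j \<le> (1/2)^i"
  by (rule power_decreasing) auto

text \<open>In a signed binary expansion with digits in [-1,1] whose first nonzero digit is
  a 1 at position K, every later nonnegative digit bounds the value from below: the
  digits after K can cancel at most the weight of position K.\<close>

lemma signed_binary_expansion_lower_bound:
  fixes t :: "nat \<Rightarrow> real"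
  assumes bounded: "\<And>k. \<bar>t k\<bar> \<le> 1" and before: "\<And>k. k < K \<Longrightarrow> 0 \<le> t k"
    and at: "t K = 1" and j: "K < j" and tj: "0 \<le> t j"
  shows "(1/2)^j \<le> (\<Sum>k. t k * (1/2)^k)"
proof -
  let ?s = "\<lambda>k. (t k + 1) * (1/2::real)^k"
  have summable: "summable ?s"
  proof (rule summable_bounded_times_half_power)
    show "\<bar>t k + 1\<bar> \<le> 2" for k using bounded[of k] by (auto simp: abs_le_iff)
  qed
  have shift: "(\<Sum>k. ?s k) = (\<Sum>k. t k * (1/2)^k) + 2"
    using suminf_add[OF summable_bounded_times_half_power[OF bounded] summable_geometric[of "1/2::real"]]
      suminf_geometric[of "1/2::real"]
    by (simp add: algebra_simps)
  have "(\<Sum>k\<le>K. ?s k) \<ge> (\<Sum>k\<le>K. if k = K then 2 * (1/2::real)^k else (1/2)^k)"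
    by (intro sum_mono) (use before at in auto)
  also have "(\<Sum>k\<le>K. if k = K then 2 * (1/2::real)^k else (1/2)^k) = (\<Sum>k<K. (1/2::real)^k) + 2 * (1/2)^K"
    by (simp add: lessThan_Suc_atMost[symmetric])
  also have "(\<Sum>k<K. (1/2::real)^k) = 2 - 2 * (1/2)^K"
    by (subst sum_gp_strict) (simp_all add: field_simps)
  finally have prefix: "2 \<le> (\<Sum>k\<le>K. ?s k)" by simp
  have later: "(1/2)^j \<le> ?s j"
    using tj by (simp add: mult_right_mono)
  have "(1/2)^j + 2 \<le> ?s j + (\<Sum>k\<le>K. ?s k)"
    using prefix later by linarith
  also have "\<dots> = (\<Sum>k\<in>insert j {..K}. ?s k)"
    using j by simp
  also have "\<dots> \<le> (\<Sum>k. ?s k)"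
  proof (rule sum_le_suminf[OF summable])
    show "0 \<le> ?s k" for k
      using bounded[of k] by (intro mult_nonneg_nonneg) (auto simp: abs_le_iff)
  qed simp
  finally show ?thesis using shift by simp
qed

lemma coordN_diff_lower_bound:
  assumes before: "\<And>k. 1 \<le> k \<Longrightarrow> k < K \<Longrightarrow> w k = c \<Longrightarrow> v k = c"
    and "1 \<le> K" and "v K = c" and "w K \<noteq> c" and "K < j" and "w j = c \<Longrightarrow> v j = c"
  shows "(1/2)^j \<le> coordN v c - coordN w c"
  unfolding coordN_diff
  by (rule signed_binary_expansion_lower_bound[where K=K])
    (use assms in \<open>auto simp: letter_ind_def\<close>)

lemma coordN_nonneg: "0 \<le> coordN v c"
  unfolding coordN_eq_suminf_letter_ind
  by (intro suminf_nonneg summable_letter_ind) (simp add: letter_ind_def)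

lemma coordN_le_1: "coordN v c \<le> 1"
proof -
  have "coordN v c \<le> (\<Sum>k. if 0 < k then (1/2::real)^k else 0)"
    unfolding coordN_eq_suminf_letter_ind
    by (rule suminf_le[OF _ summable_letter_ind sums_summable[OF half_power_tail_sums]])
      (simp add: letter_ind_def)
  also have "\<dots> = 1" using sums_unique[OF half_power_tail_sums[of 0]] by simp
  finally show ?thesis .
qed

lemma sum_letter_ind_le_1: "(\<Sum>c\<in>F. letter_ind v c k) \<le> 1"
proof -
  have "(\<Sum>c\<in>F. letter_ind v c k) = (\<Sum>c\<in>F. if c = v k then letter_ind v (v k) k else 0)"
    by (intro sum.cong) (auto simp: letter_ind_def)
  also have "\<dots> \<le> 1" by (cases "finite F") (auto simp: sum.delta letter_ind_def)
  finally show ?thesis .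
qed

definition prefix_eq :: "nat \<Rightarrow> (nat \<Rightarrow> 'a) \<Rightarrow> (nat \<Rightarrow> 'a) \<Rightarrow> bool" where
  "prefix_eq M v w \<longleftrightarrow> (\<forall>k. 1 \<le> k \<and> k \<le> M \<longrightarrow> v k = w k)"

lemma prefix_eq_mono: "prefix_eq M v w \<Longrightarrow> M' \<le> M \<Longrightarrow> prefix_eq M' v w"
  by (simp add: prefix_eq_def)

lemma prefix_eq_extend:
  assumes "prefix_eq (n - 1) v w" and "v n = w n"
  shows "prefix_eq n v w"
  unfolding prefix_eq_def
proof (intro allI impI)
  fix k assume "1 \<le> k \<and> k \<le> n"
  then show "v k = w k"
    using assms by (cases "k = n") (auto simp: prefix_eq_def)
qed

lemma first_diff_if_not_prefix_eq:
  assumes "\<not> prefix_eq M v w"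
  obtains K where "1 \<le> K" "K \<le> M" "prefix_eq (K - 1) v w" "v K \<noteq> w K"
proof -
  obtain K where K: "1 \<le> K \<and> K \<le> M \<and> v K \<noteq> w K"
    and least: "\<And>k. k < K \<Longrightarrow> \<not> (1 \<le> k \<and> k \<le> M \<and> v k \<noteq> w k)"
    using assms exists_least_iff[where P="\<lambda>k. 1 \<le> k \<and> k \<le> M \<and> v k \<noteq> w k"]
    unfolding prefix_eq_def by blast
  then have "prefix_eq (K - 1) v w" by (auto simp: prefix_eq_def)
  with K that show ?thesis by blast
qed

section \<open>Upper bounds for the l^p distance\<close>

text \<open>Each position k > M contributes 2^(-k) to the coordinates of at most one letter in
  each word, which bounds the total variation of the coordinates by twice the tail weight.\<close>

lemma sum_abs_coordN_diff_le:
  assumes "finite F" and prefix: "prefix_eq M v w"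
  shows "(\<Sum>c\<in>F. \<bar>coordN v c - coordN w c\<bar>) \<le> 2 * (1/2)^M"
proof -
  let ?t = "\<lambda>c k. \<bar>letter_ind v c k - letter_ind w c k\<bar> * (1/2::real)^k"
  have summable: "summable (?t c)" for c
    by (rule summable_bounded_times_half_power[where B=1]) (auto simp: letter_ind_def)
  have "\<bar>coordN v c - coordN w c\<bar> \<le> (\<Sum>k. ?t c k)" for c
    using summable_rabs[of "\<lambda>k. (letter_ind v c k - letter_ind w c k) * (1/2)^k"] summable[of c]
    unfolding coordN_diff by (simp add: abs_mult)
  then have "(\<Sum>c\<in>F. \<bar>coordN v c - coordN w c\<bar>) \<le> (\<Sum>c\<in>F. \<Sum>k. ?t c k)"
    by (intro sum_mono)
  also have "\<dots> = (\<Sum>k. \<Sum>c\<in>F. ?t c k)"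
    by (rule suminf_sum[symmetric]) (rule summable)
  also have "\<dots> \<le> (\<Sum>k. 2 * (if M < k then (1/2::real)^k else 0))"
  proof (rule suminf_le)
    show "summable (\<lambda>k. \<Sum>c\<in>F. ?t c k)" by (intro summable_sum summable)
    show "summable (\<lambda>k. 2 * (if M < k then (1/2::real)^k else 0))"
      by (intro summable_mult sums_summable[OF half_power_tail_sums])
    show "(\<Sum>c\<in>F. ?t c k) \<le> 2 * (if M < k then (1/2::real)^k else 0)" for k
    proof (cases "M < k")
      case True
      have "(\<Sum>c\<in>F. ?t c k) \<le> (\<Sum>c\<in>F. (letter_ind v c k + letter_ind w c k) * (1/2::real)^k)"
        by (intro sum_mono mult_right_mono) (auto simp: letter_ind_def)
      also have "\<dots> = ((\<Sum>c\<in>F. letter_ind v c k) + (\<Sum>c\<in>F. letter_ind w c k)) * (1/2)^k"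
        by (simp only: sum.distrib[symmetric] sum_distrib_right)
      also have "\<dots> \<le> 2 * (1/2)^k"
        using sum_letter_ind_le_1[where F=F and v=v and k=k]
          sum_letter_ind_le_1[where F=F and v=w and k=k]
        by (intro mult_right_mono) auto
      finally show ?thesis using True by simp
    next
      case False
      then have "?t c k = 0" for c
        using prefix by (auto simp: prefix_eq_def letter_ind_def)
      then show ?thesis using False by simp
    qed
  qed
  also have "\<dots> = 2 * (1/2)^M"
    using sums_unique[OF sums_mult[OF half_power_tail_sums[of M], of 2]] by simp
  finally show ?thesis .
qed

lemma sum_abs_coordN_diff_powr_le:
  assumes "1 \<le> p" and "finite F" and "prefix_eq M v w"
  shows "(\<Sum>c\<in>F. \<bar>coordN v c - coordN w c\<bar> powr p) \<le> 2 * (1/2)^M"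
proof -
  have "\<bar>coordN v c - coordN w c\<bar> powr p \<le> \<bar>coordN v c - coordN w c\<bar>" for c
    using powr_mono'[of 1 p "\<bar>coordN v c - coordN w c\<bar>"] \<open>1 \<le> p\<close>
      coordN_nonneg[of v c] coordN_le_1[of v c] coordN_nonneg[of w c] coordN_le_1[of w c]
    by simp
  then have "(\<Sum>c\<in>F. \<bar>coordN v c - coordN w c\<bar> powr p) \<le> (\<Sum>c\<in>F. \<bar>coordN v c - coordN w c\<bar>)"
    by (rule sum_mono)
  also have "\<dots> \<le> 2 * (1/2)^M"
    using sum_abs_coordN_diff_le assms(2,3) .
  finally show ?thesis .
qed

lemma abs_coordN_diff_powr_summable_on:
  assumes "1 \<le> p"
  shows "(\<lambda>c. \<bar>coordN v c - coordN w c\<bar> powr p) summable_on I"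
proof (rule nonneg_bdd_above_summable_on)
  show "bdd_above (sum (\<lambda>c. \<bar>coordN v c - coordN w c\<bar> powr p) ` {F. F \<subseteq> I \<and> finite F})"
    using sum_abs_coordN_diff_powr_le[OF assms, of _ 0 v w]
    by (intro bdd_aboveI[where M=2]) (auto simp: prefix_eq_def)
qed simp

lemma lp_norm_nonneg: "0 \<le> lp_norm p I x"
  by (simp add: lp_norm_def)

lemma lp_norm_le_if_prefix_eq:
  assumes "1 \<le> p" and "prefix_eq M v w"
  shows "lp_norm p I (\<lambda>c. pmap v c - pmap w c) \<le> (2 * (1/2)^M) powr (1/p)"
proof -
  have "(\<Sum>\<^sub>\<infinity>c\<in>I. \<bar>coordN v c - coordN w c\<bar> powr p) \<le> 2 * (1/2)^M"
    by (rule infsum_le_finite_sums[OF abs_coordN_diff_powr_summable_on[OF assms(1)]])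
      (rule sum_abs_coordN_diff_powr_le[OF assms(1) _ assms(2)])
  moreover have "0 \<le> (\<Sum>\<^sub>\<infinity>c\<in>I. \<bar>coordN v c - coordN w c\<bar> powr p)"
    by (rule infsum_nonneg) simp
  ultimately show ?thesis
    unfolding lp_norm_def pmap_def using assms(1) by (intro powr_mono2) auto
qed

lemma abs_coordN_diff_le_lp_norm:
  assumes "1 \<le> p" and "c \<in> I"
  shows "\<bar>coordN v c - coordN w c\<bar> \<le> lp_norm p I (\<lambda>c. pmap v c - pmap w c)"
proof -
  let ?d = "\<lambda>c. \<bar>coordN v c - coordN w c\<bar> powr p"
  have "?d c = (\<Sum>\<^sub>\<infinity>x\<in>{c}. ?d x)" by simp
  also have "\<dots> \<le> (\<Sum>\<^sub>\<infinity>x\<in>I. ?d x)"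
    by (rule infsum_mono_neutral[OF _ abs_coordN_diff_powr_summable_on[OF assms(1)]])
      (use assms(2) in auto)
  finally have "(?d c) powr (1/p) \<le> (\<Sum>\<^sub>\<infinity>x\<in>I. ?d x) powr (1/p)"
    using assms(1) by (intro powr_mono2) auto
  then show ?thesis
    using assms(1) by (simp add: lp_norm_def pmap_def powr_powr)
qed

lemma dN_eq_inverse_first_diff:
  assumes "1 \<le> k" and "v k \<noteq> w k"
  shows "dN v w = 1 / real (LEAST k. 1 \<le> k \<and> v k \<noteq> w k)"
  using assms by (auto simp: dN_def)

lemma dN_nonneg: "0 \<le> dN v w"
  by (simp add: dN_def)

lemma dN_le_if_prefix_eq:
  assumes "prefix_eq M v w"
  shows "dN v w \<le> 1 / real (M + 1)"
proof (cases "\<forall>k\<ge>1. v k = w k")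
  case False
  define L where "L = (LEAST k. 1 \<le> k \<and> v k \<noteq> w k)"
  have L: "1 \<le> L \<and> v L \<noteq> w L"
    using False unfolding L_def by (metis (mono_tags, lifting) LeastI)
  have "M + 1 \<le> L"
    using assms L by (auto simp: prefix_eq_def not_less_eq_eq[symmetric])
  moreover have "dN v w = 1 / real L"
    unfolding L_def using L by (intro dN_eq_inverse_first_diff) auto
  ultimately show ?thesis by (simp add: frac_le)
qed (simp add: dN_def)

lemma prefix_eq_if_dN_less:
  assumes "dN v w < 1 / real M"
  shows "prefix_eq M v w"
  unfolding prefix_eq_def
proof (intro allI impI)
  fix k assume k: "1 \<le> k \<and> k \<le> M"
  show "v k = w k"
  proof (rule ccontr)
    assume "v k \<noteq> w k"
    define L where "L = (LEAST k. 1 \<le> k \<and> v k \<noteq> w k)"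
    have "L \<le> k" and "1 \<le> L"
      unfolding L_def using k \<open>v k \<noteq> w k\<close> by (auto intro: Least_le LeastI2)
    moreover have "dN v w = 1 / real L"
      unfolding L_def using k \<open>v k \<noteq> w k\<close> by (intro dN_eq_inverse_first_diff) auto
    ultimately have "1 / real M \<le> dN v w"
      using k by (simp add: frac_le)
    with assms show False by simp
  qed
qed

lemma dN_tendsto_zero_iff:
  "(\<lambda>n. dN (f n) w) \<longlonglongrightarrow> 0 \<longleftrightarrow> (\<forall>M. eventually (\<lambda>n. prefix_eq M (f n) w) sequentially)"
proof
  assume lim: "(\<lambda>n. dN (f n) w) \<longlonglongrightarrow> 0"
  show "\<forall>M. eventually (\<lambda>n. prefix_eq M (f n) w) sequentially"
  proof
    fix M
    have "eventually (\<lambda>n. dN (f n) w < 1 / real (M + 1)) sequentially"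
      by (rule order_tendstoD(2)[OF lim]) simp
    then show "eventually (\<lambda>n. prefix_eq M (f n) w) sequentially"
    proof eventually_elim
      case (elim n)
      then have "prefix_eq (M + 1) (f n) w" by (rule prefix_eq_if_dN_less)
      then show ?case by (rule prefix_eq_mono) simp
    qed
  qed
next
  assume prefixes: "\<forall>M. eventually (\<lambda>n. prefix_eq M (f n) w) sequentially"
  show "(\<lambda>n. dN (f n) w) \<longlonglongrightarrow> 0"
  proof (rule order_tendstoI)
    show "eventually (\<lambda>n. a < dN (f n) w) sequentially" if "a < 0" for a
      using that dN_nonneg by (intro always_eventually allI) (rule less_le_trans)
    show "eventually (\<lambda>n. dN (f n) w < a) sequentially" if "0 < a" for a
    proof -
      obtain M where M: "0 < M" "inverse (real M) < a"
        using ex_inverse_of_nat_less[OF \<open>0 < a\<close>] by auto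
      have "1 / real (M + 1) \<le> inverse (real M)"
        using M by (simp add: inverse_eq_divide frac_le)
      with M have bound: "1 / real (M + 1) < a" by linarith
      from prefixes[rule_format, of M] show ?thesis
      proof eventually_elim
        case (elim n)
        then show ?case using dN_le_if_prefix_eq[of M "f n" w] bound by linarith
      qed
    qed
  qed
qed

section \<open>Separated coordinates\<close>

definition coord_gap :: "'a set \<Rightarrow> (nat \<Rightarrow> 'a) \<Rightarrow> (nat \<Rightarrow> 'a) \<Rightarrow> nat \<Rightarrow> bool" where
  "coord_gap I v w J \<longleftrightarrow> (\<exists>c\<in>I. (1/2)^J \<le> \<bar>coordN v c - coordN w c\<bar>)"

lemma coord_gap_mono: "coord_gap I v w J \<Longrightarrow> J \<le> J' \<Longrightarrow> coord_gap I v w J'"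
  using order_trans[OF half_power_antimono] unfolding coord_gap_def by blast

lemma coord_gapI:
  assumes "c \<in> I" and "j \<le> J"
    and "(1/2)^j \<le> coordN v c - coordN w c \<or> (1/2)^j \<le> coordN w c - coordN v c"
  shows "coord_gap I v w J"
proof -
  have "(1/2)^j \<le> \<bar>coordN v c - coordN w c\<bar>"
    using assms(3) by linarith
  then show ?thesis
    using assms(1) order_trans[OF half_power_antimono[OF \<open>j \<le> J\<close>]]
    unfolding coord_gap_def by blast
qed

lemma coord_gap_cong_pmap: "pmap w' = pmap w \<Longrightarrow> coord_gap I v w' J \<longleftrightarrow> coord_gap I v w J"
  by (simp add: coord_gap_def pmap_def)

lemma eventually_not_coord_gap:
  assumes "1 \<le> p" and "(\<lambda>n. lp_norm p I (\<lambda>c. pmap (f n) c - pmap w c)) \<longlonglongrightarrow> 0"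
  shows "eventually (\<lambda>n. \<not> coord_gap I (f n) w J) sequentially"
proof -
  have "eventually (\<lambda>n. lp_norm p I (\<lambda>c. pmap (f n) c - pmap w c) < (1/2)^J) sequentially"
    by (rule order_tendstoD(2)[OF assms(2)]) simp
  then show ?thesis
  proof eventually_elim
    case (elim n)
    then show ?case
      using abs_coordN_diff_le_lp_norm[OF assms(1), of _ I "f n" w]
      unfolding coord_gap_def by force
  qed
qed

lemma lp_tendsto_zero_if_eventually_prefix_eq:
  assumes "1 \<le> p"
    and prefixes: "\<And>M. eventually (\<lambda>n. \<exists>w'\<in>W. prefix_eq M (f n) w') sequentially"
    and same_image: "\<And>w'. w' \<in> W \<Longrightarrow> pmap w' = pmap w"
  shows "(\<lambda>n. lp_norm p I (\<lambda>c. pmap (f n) c - pmap w c)) \<longlonglongrightarrow> 0"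
proof (rule order_tendstoI)
  show "eventually (\<lambda>n. a < lp_norm p I (\<lambda>c. pmap (f n) c - pmap w c)) sequentially"
    if "a < 0" for a
    using that lp_norm_nonneg by (intro always_eventually allI) (rule less_le_trans)
  show "eventually (\<lambda>n. lp_norm p I (\<lambda>c. pmap (f n) c - pmap w c) < a) sequentially"
    if "0 < a" for a
  proof -
    obtain M where M: "(1/2::real)^M < a powr p / 2"
      using real_arch_pow_inv[of "a powr p / 2" "1/2"] \<open>0 < a\<close> by auto
    have "(2 * (1/2::real)^M) powr (1/p) < (a powr p) powr (1/p)"
      using M \<open>1 \<le> p\<close> by (intro powr_less_mono2) auto
    also have "\<dots> = a" using \<open>0 < a\<close> \<open>1 \<le> p\<close> by (simp add: powr_powr)
    finally have bound: "(2 * (1/2::real)^M) powr (1/p) < a" .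
    from prefixes[of M] show ?thesis
    proof eventually_elim
      case (elim n)
      then obtain w' where "w' \<in> W" and "prefix_eq M (f n) w'" by blast
      then show ?case
        using lp_norm_le_if_prefix_eq[OF \<open>1 \<le> p\<close>, of M "f n" w' I] same_image bound by force
    qed
  qed
qed

lemma inN_letter: "inN A v \<Longrightarrow> 1 \<le> k \<Longrightarrow> v k \<in> A"
  by (simp add: inN_def)

text \<open>The letter z has no coordinate, so each case below locates a letter other than z
  whose occurrences in the two words differ early.\<close>

lemma coord_gap_if_first_diff_at_omitted_letter:
  assumes K: "1 \<le> K" and prefix: "prefix_eq (K - 1) v w" and vK: "v K = z" and "w K \<noteq> z"
    and j: "K < j" "j \<le> J" and wj: "w j \<noteq> z" "w j \<noteq> w K" and "inN A w"
  shows "coord_gap (A - {z}) v w (J + 1)"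
proof -
  have before: "v k = w k" if "1 \<le> k" "k < K" for k
    using prefix that by (simp add: prefix_eq_def)
  have letters: "w K \<in> A" "w j \<in> A"
    using K j inN_letter[OF \<open>inN A w\<close>] by auto
  show ?thesis
  proof (cases "\<exists>k. K < k \<and> k \<le> j + 1 \<and> v k \<noteq> w K")
    case True
    then obtain k where k: "K < k" "k \<le> j + 1" "v k \<noteq> w K" by blast
    have "(1/2)^k \<le> coordN w (w K) - coordN v (w K)"
      by (rule coordN_diff_lower_bound[where K=K])
        (use K k vK \<open>w K \<noteq> z\<close> in \<open>simp_all add: before\<close>)
    with \<open>w K \<noteq> z\<close> letters j k(2) show ?thesis
      by (intro coord_gapI[where c="w K" and j=k]) auto
  next
    case False
    then have tail: "v k = w K" if "K < k" "k \<le> j + 1" for k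
      using that by blast
    \<comment> \<open>the letter w j occurs in w at position j, but not in v at positions K to j + 1\<close>
    have "(1/2)^(j+1) \<le> coordN w (w j) - coordN v (w j)"
    proof (rule coordN_diff_lower_bound[where K=j])
      fix k assume k: "1 \<le> k" "k < j" "v k = w j"
      consider "k < K" | "k = K" | "K < k" by linarith
      then show "w k = w j"
      proof cases
        case 1 then show ?thesis using before k by simp
      next
        case 2 then show ?thesis using k vK wj by simp
      next
        case 3 then show ?thesis using tail[of k] k wj by simp
      qed
    qed (use tail[of j] tail[of "j + 1"] K j wj in simp_all)
    with letters wj j show ?thesis
      by (intro coord_gapI[where c="w j" and j="j + 1"]) auto
  qed
qed

lemma coord_gap_if_nonconstant_after_first_diff:
  assumes K: "1 \<le> K" and prefix: "prefix_eq (K - 1) v w" and diff: "v K \<noteq> w K"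
    and j: "K < ja" "ja \<le> J" "K < jb" "jb \<le> J" and nonconst: "w ja \<noteq> w jb"
    and "inN A v" "inN A w"
  shows "coord_gap (A - {z}) v w (J + 1)"
proof -
  have before: "v k = w k" if "1 \<le> k" "k < K" for k
    using prefix that by (simp add: prefix_eq_def)
  have letters: "v K \<in> A" "w K \<in> A"
    using K inN_letter[OF \<open>inN A v\<close>] inN_letter[OF \<open>inN A w\<close>] by auto
  show ?thesis
  proof (cases "v K = z")
    case False
    obtain j where j': "j \<in> {ja, jb}" "w j \<noteq> v K"
      using nonconst by (metis insertCI)
    then have "K < j" "j \<le> J" using j by auto
    have "(1/2)^j \<le> coordN v (v K) - coordN w (v K)"
      by (rule coordN_diff_lower_bound[where K=K])
        (use K \<open>K < j\<close> j'(2) diff in \<open>simp_all add: before\<close>)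
    with False letters \<open>j \<le> J\<close> show ?thesis
      by (intro coord_gapI[where c="v K" and j=j]) auto
  next
    case vK: True
    show ?thesis
    proof (cases "\<exists>j\<in>{ja, jb}. w j = w K")
      case True
      then obtain j where j': "j \<in> {ja, jb}" "w j = w K" by blast
      then have "K < j" "j \<le> J" using j by auto
      have "(1/2)^j \<le> coordN w (w K) - coordN v (w K)"
        by (rule coordN_diff_lower_bound[where K=K])
          (use K \<open>K < j\<close> j'(2) diff in \<open>simp_all add: before\<close>)
      with vK diff letters \<open>j \<le> J\<close> show ?thesis
        by (intro coord_gapI[where c="w K" and j=j]) auto
    next
      case False
      obtain j where j': "j \<in> {ja, jb}" "w j \<noteq> z"
        using nonconst by (metis insertCI)
      with False j show ?thesis
        by (intro coord_gap_if_first_diff_at_omitted_letter[OF K prefix vK _ _ _ _ _ \<open>inN A w\<close>])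
          (use vK diff in auto)
    qed
  qed
qed

lemma coord_gap_if_first_diff_in_constant_tail:
  assumes K: "1 \<le> K" and prefix: "prefix_eq (K - 1) v w" and diff: "v K \<noteq> b"
    and tail: "\<And>k. K \<le> k \<Longrightarrow> w k = b" and "inN A v" and "b \<in> A"
  shows "coord_gap (A - {z}) v w (K + 1)"
proof -
  have before: "v k = w k" if "1 \<le> k" "k < K" for k
    using prefix that by (simp add: prefix_eq_def)
  have letters: "v K \<in> A" "b \<in> A"
    using K inN_letter[OF \<open>inN A v\<close>] \<open>b \<in> A\<close> by auto
  show ?thesis
  proof (cases "v K = z")
    case False
    have "(1/2)^(K+1) \<le> coordN v (v K) - coordN w (v K)"
      by (rule coordN_diff_lower_bound[where K=K]) (use before K diff tail in auto)
    with False letters show ?thesis by (intro coord_gapI[where j="K + 1"]) auto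
  next
    case True
    have "(1/2)^(K+1) \<le> coordN w b - coordN v b"
      by (rule coordN_diff_lower_bound[where K=K]) (use before K diff tail in auto)
    with True diff letters show ?thesis by (intro coord_gapI[where c=b and j="K + 1"]) auto
  qed
qed

lemma coord_gap_if_letter_outside_pair:
  assumes n: "1 \<le> n" and prefix: "prefix_eq (n - 1) v w"
    and wn: "w n = a" and tail: "\<And>k. n < k \<Longrightarrow> w k = b" and "a \<noteq> b"
    and va: "v n \<noteq> a" and vb: "v n \<noteq> b" and "inN A v" "inN A w"
  shows "coord_gap (A - {z}) v w (n + 2)"
proof -
  have before: "v k = w k" if "1 \<le> k" "k < n" for k
    using prefix that by (simp add: prefix_eq_def)
  have letters: "v n \<in> A" "a \<in> A" "b \<in> A"
    using n wn tail[of "n + 1"] inN_letter[OF \<open>inN A v\<close>] inN_letter[OF \<open>inN A w\<close>, of n]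
      inN_letter[OF \<open>inN A w\<close>, of "n + 1"] by auto
  show ?thesis
  proof (cases "v n = z")
    case False
    have "(1/2)^(n+1) \<le> coordN v (v n) - coordN w (v n)"
      by (rule coordN_diff_lower_bound[where K=n]) (use before n wn tail va vb in auto)
    with False letters show ?thesis by (intro coord_gapI[where j="n + 1"]) auto
  next
    case vn: True
    show ?thesis
    proof (cases "v (n + 1) = a")
      case True
      have "(1/2)^(n+2) \<le> coordN w b - coordN v b"
      proof (rule coordN_diff_lower_bound[where K="n+1"])
        fix k assume "1 \<le> k" "k < n + 1" "v k = b"
        then show "w k = b" using before vn vb by (cases "k = n") auto
      qed (use True tail \<open>a \<noteq> b\<close> in auto)
      with vn vb letters show ?thesis by (intro coord_gapI[where c=b and j="n + 2"]) auto
    next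
      case False
      have "(1/2)^(n+1) \<le> coordN w a - coordN v a"
        by (rule coordN_diff_lower_bound[where K=n]) (use before n wn vn va False in auto)
      with vn va letters show ?thesis by (intro coord_gapI[where c=a and j="n + 1"]) auto
    qed
  qed
qed

lemma prefix_eq_if_no_coord_gap_nonconstant:
  assumes no_gap: "\<not> coord_gap (A - {z}) v w (J + 1)"
    and "M < ja" "ja \<le> J" "M < jb" "jb \<le> J" "w ja \<noteq> w jb" "inN A v" "inN A w"
  shows "prefix_eq M v w"
proof (rule ccontr)
  assume "\<not> prefix_eq M v w"
  then obtain K where K: "1 \<le> K" "K \<le> M" "prefix_eq (K - 1) v w" "v K \<noteq> w K"
    by (rule first_diff_if_not_prefix_eq)
  have "coord_gap (A - {z}) v w (J + 1)"
    by (rule coord_gap_if_nonconstant_after_first_diff[where K=K and ja=ja and jb=jb])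
      (use K assms(2-) in auto)
  with no_gap show False by contradiction
qed

lemma prefix_eq_if_no_coord_gap_constant_tail:
  assumes no_gap: "\<not> coord_gap (A - {z}) v w (M + 1)" and prefix: "prefix_eq N v w"
    and tail: "\<And>k. N < k \<Longrightarrow> w k = b" and "inN A v" "b \<in> A"
  shows "prefix_eq M v w"
proof (rule ccontr)
  assume "\<not> prefix_eq M v w"
  then obtain K where K: "1 \<le> K" "K \<le> M" "prefix_eq (K - 1) v w" "v K \<noteq> w K"
    by (rule first_diff_if_not_prefix_eq)
  with prefix have "N < K" by (auto simp: prefix_eq_def)
  have "coord_gap (A - {z}) v w (K + 1)"
    by (rule coord_gap_if_first_diff_in_constant_tail[where b=b])
      (use K \<open>N < K\<close> assms(4,5) tail in auto)
  with no_gap K(2) show False using coord_gap_mono[of "A - {z}" v w "K + 1" "M + 1"] by simp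
qed

section \<open>Words with a two-letter tail\<close>

definition tail_word :: "(nat \<Rightarrow> 'a) \<Rightarrow> nat \<Rightarrow> 'a \<Rightarrow> 'a \<Rightarrow> nat \<Rightarrow> 'a" where
  "tail_word w n a b = (\<lambda>k. if k = n then a else if n < k then b else w k)"

lemma coordN_tail_word:
  assumes "1 \<le> n"
  shows "coordN (tail_word w n a b) c =
    (\<Sum>k\<in>{1..<n}. if w k = c then (1/2)^k else 0)
      + (if a = c then (1/2)^n else 0) + (if b = c then (1/2)^n else 0)"
proof -
  let ?head = "\<lambda>k. if k \<in> {1..<n} then if w k = c then (1/2::real)^k else 0 else 0"
  let ?mid = "\<lambda>k. if k = n then if a = c then (1/2::real)^k else 0 else 0"
  let ?tail = "\<lambda>k. (if b = c then 1 else 0) * (if n < k then (1/2::real)^k else 0)"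
  have "(\<lambda>k. if 1 \<le> k \<and> tail_word w n a b k = c then (1/2::real)^k else 0)
      = (\<lambda>k. ?head k + ?mid k + ?tail k)"
    using assms by (auto simp: tail_word_def fun_eq_iff)
  moreover have "(\<lambda>k. ?head k + ?mid k + ?tail k) sums
      ((\<Sum>k\<in>{1..<n}. if w k = c then (1/2)^k else 0)
        + (if a = c then (1/2)^n else 0) + (if b = c then 1 else 0) * (1/2)^n)"
    by (intro sums_add sums_If_finite_set sums_single sums_mult half_power_tail_sums) simp
  ultimately show ?thesis
    unfolding coordN_def by (simp add: sums_iff)
qed

lemma pmap_tail_word_swap: "1 \<le> n \<Longrightarrow> pmap (tail_word w n a b) = pmap (tail_word w n b a)"
  by (simp add: pmap_def coordN_tail_word fun_eq_iff)

lemma prefix_eq_tail_word_iff: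
  assumes "1 \<le> n" and "n \<le> m"
  shows "prefix_eq m v (tail_word w n a b) \<longleftrightarrow>
    prefix_eq (n - 1) v w \<and> v n = a \<and> (\<forall>i. n + 1 \<le> i \<and> i \<le> m \<longrightarrow> v i = b)"
    (is "?prefix \<longleftrightarrow> ?head \<and> ?mid \<and> ?tail")
proof
  assume ?prefix
  then have "v k = tail_word w n a b k" if "1 \<le> k" "k \<le> m" for k
    using that by (simp add: prefix_eq_def)
  then show "?head \<and> ?mid \<and> ?tail"
    using assms by (auto simp: prefix_eq_def tail_word_def)
next
  assume "?head \<and> ?mid \<and> ?tail"
  then show ?prefix
    unfolding prefix_eq_def tail_word_def
    by (auto simp: prefix_eq_def not_less_eq_eq[symmetric])
qed

section \<open>The two cases of the theorem\<close>

lemma lp_tendsto_zero_iff_dN_tendsto_zero: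
  assumes "1 \<le> p" and words: "\<And>n. 1 \<le> n \<Longrightarrow> inN A (f n)" and "inN A w"
    and nonconst: "\<And>q. 1 \<le> q \<Longrightarrow> \<exists>k\<ge>q. w k \<noteq> w q"
  shows "(\<lambda>n. lp_norm p (A - {z}) (\<lambda>c. pmap (f n) c - pmap w c)) \<longlonglongrightarrow> 0 \<longleftrightarrow>
    (\<lambda>n. dN (f n) w) \<longlonglongrightarrow> 0"
proof
  assume lim: "(\<lambda>n. lp_norm p (A - {z}) (\<lambda>c. pmap (f n) c - pmap w c)) \<longlonglongrightarrow> 0"
  show "(\<lambda>n. dN (f n) w) \<longlonglongrightarrow> 0"
    unfolding dN_tendsto_zero_iff
  proof
    fix M
    obtain k where "M + 1 \<le> k" "w k \<noteq> w (M + 1)" using nonconst[of "M + 1"] by auto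
    then have "M + 1 < k" by (cases "k = M + 1") auto
    have "eventually (\<lambda>n. \<not> coord_gap (A - {z}) (f n) w (k + 1) \<and> 1 \<le> n) sequentially"
      using eventually_not_coord_gap[OF \<open>1 \<le> p\<close> lim] eventually_ge_at_top
      by (rule eventually_conj)
    then show "eventually (\<lambda>n. prefix_eq M (f n) w) sequentially"
    proof eventually_elim
      case (elim n)
      show ?case
        by (rule prefix_eq_if_no_coord_gap_nonconstant[where ja="M + 1" and jb=k and J=k])
          (use elim \<open>M + 1 < k\<close> \<open>w k \<noteq> w (M + 1)\<close> words \<open>inN A w\<close> in auto)
    qed
  qed
next
  assume "(\<lambda>n. dN (f n) w) \<longlonglongrightarrow> 0"
  then show "(\<lambda>n. lp_norm p (A - {z}) (\<lambda>c. pmap (f n) c - pmap w c)) \<longlonglongrightarrow> 0"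
    unfolding dN_tendsto_zero_iff
    by (intro lp_tendsto_zero_if_eventually_prefix_eq[OF \<open>1 \<le> p\<close>, where W="{w}"]) auto
qed

lemma prefix_eq_tail_word_if_no_coord_gap:
  fixes n m :: nat and a b :: 'a and v w :: "nat \<Rightarrow> 'a"
  defines "u \<equiv> tail_word w n a b" and "u' \<equiv> tail_word w n b a"
  assumes no_gap: "\<not> coord_gap (A - {z}) v u (m + 1)" and "n + 1 < m" and "1 \<le> n" and "a \<noteq> b"
    and "inN A v" "inN A u"
  shows "prefix_eq m v u \<or> prefix_eq m v u'"
proof -
  have u: "u n = a" "\<And>k. n < k \<Longrightarrow> u k = b"
    and u': "u' n = b" "\<And>k. n < k \<Longrightarrow> u' k = a" "prefix_eq (n - 1) u' u"
    by (auto simp: u_def u'_def tail_word_def prefix_eq_def)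
  have ab: "a \<in> A" "b \<in> A"
    using inN_letter[OF \<open>inN A u\<close>, of n] inN_letter[OF \<open>inN A u\<close>, of "n + 1"] u \<open>1 \<le> n\<close>
    by auto
  have no_gap': "\<not> coord_gap (A - {z}) v u' (m + 1)"
    using no_gap coord_gap_cong_pmap[OF pmap_tail_word_swap[OF \<open>1 \<le> n\<close>, of w a b]]
    unfolding u_def u'_def by blast
  have early: "\<not> coord_gap (A - {z}) v u (n + 2)"
    using no_gap \<open>n + 1 < m\<close> coord_gap_mono[of "A - {z}" v u "n + 2" "m + 1"] by auto
  have prefix: "prefix_eq (n - 1) v u"
    by (rule prefix_eq_if_no_coord_gap_nonconstant[where ja=n and jb="n + 1" and J="n + 1"])
      (use early u \<open>1 \<le> n\<close> \<open>a \<noteq> b\<close> \<open>inN A v\<close> \<open>inN A u\<close> in auto)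
  have "v n = a \<or> v n = b"
    using coord_gap_if_letter_outside_pair[OF \<open>1 \<le> n\<close> prefix u \<open>a \<noteq> b\<close> _ _
        \<open>inN A v\<close> \<open>inN A u\<close>] early by blast
  then show ?thesis
  proof
    assume "v n = a"
    then have "prefix_eq n v u"
      using prefix_eq_extend[OF prefix] u(1) by simp
    then have "prefix_eq m v u"
      by (rule prefix_eq_if_no_coord_gap_constant_tail[where N=n and b=b, rotated])
        (use no_gap u(2) \<open>inN A v\<close> ab in auto)
    then show ?thesis ..
  next
    assume "v n = b"
    with prefix u' have "prefix_eq (n - 1) v u'" and "v n = u' n"
      by (auto simp: prefix_eq_def)
    then have "prefix_eq n v u'" by (rule prefix_eq_extend)
    then have "prefix_eq m v u'"
      by (rule prefix_eq_if_no_coord_gap_constant_tail[where N=n and b=a, rotated])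
        (use no_gap' u'(2) \<open>inN A v\<close> ab in auto)
    then show ?thesis ..
  qed
qed

lemma lp_tendsto_zero_iff_eventually_prefix_eq_tail_word:
  fixes n0 :: nat and a b :: 'a and w :: "nat \<Rightarrow> 'a" and f :: "nat \<Rightarrow> nat \<Rightarrow> 'a"
  defines "u \<equiv> tail_word w n0 a b" and "u' \<equiv> tail_word w n0 b a"
  assumes "1 \<le> p" and words: "\<And>n. 1 \<le> n \<Longrightarrow> inN A (f n)" and "inN A u"
    and "1 \<le> n0" and "a \<noteq> b"
  shows "(\<lambda>n. lp_norm p (A - {z}) (\<lambda>c. pmap (f n) c - pmap u c)) \<longlonglongrightarrow> 0 \<longleftrightarrow>
    (\<forall>m>n0 + 1. eventually (\<lambda>n. prefix_eq m (f n) u \<or> prefix_eq m (f n) u') sequentially)"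
proof
  assume lim: "(\<lambda>n. lp_norm p (A - {z}) (\<lambda>c. pmap (f n) c - pmap u c)) \<longlonglongrightarrow> 0"
  show "\<forall>m>n0 + 1. eventually (\<lambda>n. prefix_eq m (f n) u \<or> prefix_eq m (f n) u') sequentially"
  proof (intro allI impI)
    fix m assume "n0 + 1 < m"
    have "eventually (\<lambda>n. \<not> coord_gap (A - {z}) (f n) u (m + 1) \<and> 1 \<le> n) sequentially"
      using eventually_not_coord_gap[OF \<open>1 \<le> p\<close> lim] eventually_ge_at_top
      by (rule eventually_conj)
    then show "eventually (\<lambda>n. prefix_eq m (f n) u \<or> prefix_eq m (f n) u') sequentially"
    proof eventually_elim
      case (elim n)
      then show ?case
        unfolding u_def u'_def
        by (intro prefix_eq_tail_word_if_no_coord_gap)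
          (use \<open>n0 + 1 < m\<close> \<open>1 \<le> n0\<close> \<open>a \<noteq> b\<close> words \<open>inN A u\<close> in \<open>auto simp: u_def\<close>)
    qed
  qed
next
  assume prefixes: "\<forall>m>n0 + 1. eventually (\<lambda>n. prefix_eq m (f n) u \<or> prefix_eq m (f n) u') sequentially"
  show "(\<lambda>n. lp_norm p (A - {z}) (\<lambda>c. pmap (f n) c - pmap u c)) \<longlonglongrightarrow> 0"
  proof (rule lp_tendsto_zero_if_eventually_prefix_eq[OF \<open>1 \<le> p\<close>, where W="{u, u'}"])
    show "eventually (\<lambda>n. \<exists>w'\<in>{u, u'}. prefix_eq M (f n) w') sequentially" for M
    proof -
      have "eventually (\<lambda>n. prefix_eq (max M (n0 + 2)) (f n) u
          \<or> prefix_eq (max M (n0 + 2)) (f n) u') sequentially"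
        using prefixes by simp
      then show ?thesis
        by eventually_elim (use prefix_eq_mono[of "max M (n0 + 2)" _ _ M] in auto)
    qed
    show "pmap w' = pmap u" if "w' \<in> {u, u'}" for w'
      using that pmap_tail_word_swap[OF \<open>1 \<le> n0\<close>] by (auto simp: u_def u'_def)
  qed
qed

lemma eventually_sequentially_from_1: "eventually P sequentially \<longleftrightarrow> (\<exists>N\<ge>1. \<forall>n\<ge>N. P n)"
  unfolding eventually_sequentially by (metis max.cobounded1 max.cobounded2 order_trans)

theorem theorem3p1:
  fixes A :: "'a set" and z :: 'a and p :: real
    and \<alpha>s :: "nat \<Rightarrow> nat \<Rightarrow> 'a" and \<alpha> :: "nat \<Rightarrow> 'a"
  assumes "infinite A" and "z \<in> A" and "1 \<le> p"
    and "\<And>n. 1 \<le> n \<Longrightarrow> inN A (\<alpha>s n)"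
    and "inN A \<alpha>"
  shows "((\<forall>q\<ge>1. \<not> (\<forall>k\<ge>q. \<alpha> k = \<alpha> q)) \<longrightarrow>
           (((\<lambda>n. lp_norm p (A - {z}) (\<lambda>c. pmap (\<alpha>s n) c - pmap \<alpha> c)) \<longlonglongrightarrow> 0)
            \<longleftrightarrow> ((\<lambda>n. dN (\<alpha>s n) \<alpha>) \<longlonglongrightarrow> 0)))
       \<and> (\<forall>n0 a b. 2 \<le> n0 \<and> a \<in> A \<and> b \<in> A \<and> a \<noteq> b \<and> \<alpha> n0 = a
               \<and> (\<forall>k>n0. \<alpha> k = b) \<longrightarrow>
           (((\<lambda>n. lp_norm p (A - {z}) (\<lambda>c. pmap (\<alpha>s n) c - pmap \<alpha> c)) \<longlonglongrightarrow> 0)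
            \<longleftrightarrow> (\<forall>m. m > n0 + 1 \<longrightarrow> (\<exists>lm\<ge>1. \<forall>l\<ge>lm.
                  ((\<forall>i. 1 \<le> i \<and> i \<le> n0 - 1 \<longrightarrow> \<alpha>s l i = \<alpha> i) \<and> \<alpha>s l n0 = a
                     \<and> (\<forall>i. n0 + 1 \<le> i \<and> i \<le> m \<longrightarrow> \<alpha>s l i = b))
                \<or> ((\<forall>i. 1 \<le> i \<and> i \<le> n0 - 1 \<longrightarrow> \<alpha>s l i = \<alpha> i) \<and> \<alpha>s l n0 = b
                     \<and> (\<forall>i. n0 + 1 \<le> i \<and> i \<le> m \<longrightarrow> \<alpha>s l i = a))))))"
  apply (intro conjI impI allI)
  subgoal by (rule lp_tendsto_zero_iff_dN_tendsto_zero[OF assms(3-5)]) auto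
  subgoal premises hyps for n0 a b
  proof -
    from hyps have "1 \<le> n0" "a \<noteq> b" and \<alpha>: "tail_word \<alpha> n0 a b = \<alpha>"
      by (auto simp: tail_word_def)
    have prefix_iff: "prefix_eq m v (tail_word \<alpha> n0 c d) \<longleftrightarrow>
        (\<forall>i. 1 \<le> i \<and> i \<le> n0 - 1 \<longrightarrow> v i = \<alpha> i) \<and> v n0 = c
          \<and> (\<forall>i. n0 + 1 \<le> i \<and> i \<le> m \<longrightarrow> v i = d)"
      if "n0 + 1 < m" for m v c d
      using prefix_eq_tail_word_iff[of n0 m v \<alpha> c d] \<open>1 \<le> n0\<close> that by (simp add: prefix_eq_def)
    have "((\<lambda>n. lp_norm p (A - {z}) (\<lambda>c. pmap (\<alpha>s n) c - pmap \<alpha> c)) \<longlonglongrightarrow> 0) \<longleftrightarrow>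
        (\<forall>m>n0 + 1. eventually (\<lambda>l. prefix_eq m (\<alpha>s l) (tail_word \<alpha> n0 a b)
          \<or> prefix_eq m (\<alpha>s l) (tail_word \<alpha> n0 b a)) sequentially)"
      using lp_tendsto_zero_iff_eventually_prefix_eq_tail_word[of p A \<alpha>s \<alpha> n0 a b z]
        assms(3-5) \<open>1 \<le> n0\<close> \<open>a \<noteq> b\<close> by (simp add: \<alpha>)
    then show ?thesis
      by (simp add: prefix_iff eventually_sequentially_from_1)
  qed
  done

end
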